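(* Let $(\mathrm{G},\mu)$ be a Lorentzian Lie group, with Lie algebra $\mathfrak{g}$ and inner product $\langle\cdot,\cdot\rangle=\mu(e)$ on $\mathfrak{g}$. Then $\mu$ is flat and $\mathrm{G}$ carries a timelike left-invariant Killing vector field if and only if $\mathfrak{g}$ splits as a $\langle\cdot,\cdot\rangle$-orthogonal direct sum $\mathfrak{g}=S(\mathfrak{g})\oplus[\mathfrak{g},\mathfrak{g}]$, where $[\mathfrak{g},\mathfrak{g}]$ is abelian, and $S(\mathfrak{g})$ is abelian and contains a timelike vector (i.e. some $u\in S(\mathfrak{g})$ with $\langle u,u\rangle<0$). Moreover, in this case the dimension of $[\mathfrak{g},\mathfrak{g}]$ is even and the Levi-Civita product is given by $\mathrm{L}_a=\mathrm{ad}_a$ if $a\in S(\mathfrak{g})$ and $\mathrm{L}_a=0$ if $a\in[\mathfrak{g},\mathfrak{g}]$.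
   Context: A Lorentzian Lie group is a Lie group $\mathrm{G}$ with a left-invariant pseudo-Riemannian metric $\mu$ of signature $(-,+,\dots,+)$. The Levi-Civita connection of $\mu$ defines a product $(u,v)\mapsto uv$ on $\mathfrak{g}$ (the Levi-Civita product) by $2\langle uv,w\rangle=\langle[u,v],w\rangle-\langle[v,w],u\rangle+\langle[w,u],v\rangle$; $\mathrm{L}_u(v)=uv$. The metric is flat iff the curvature $K(u,v)=\mathrm{L}_{[u,v]}-[\mathrm{L}_u,\mathrm{L}_v]$ vanishes identically. $S(\mathfrak{g})=\{u\in\mathfrak{g}:\mathrm{ad}_u+\mathrm{ad}_u^*=0\}$, where $\mathrm{ad}_u^*$ is the adjoint of $\mathrm{ad}_u$ with respect to $\langle\cdot,\cdot\rangle$; a left-invariant vector field $X$ is Killing iff $X(e)\in S(\mathfrak{g})$. A vector field $X$ is timelike if $\mu(X,X)<0$ everywhere. *)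

theory Defs
  imports "HOL-Analysis.Analysis"
begin

text \<open>A finite-dimensional real Lie algebra: the carrier is a finite-dimensional real
vector space (type class euclidean_space is used only for its vector space structure;
its built-in inner product plays no role).\<close>

definition lie_algebra :: "('a::euclidean_space \<Rightarrow> 'a \<Rightarrow> 'a) \<Rightarrow> bool" where
  "lie_algebra br \<longleftrightarrow> bilinear br \<and> (\<forall>x. br x x = 0) \<and>
     (\<forall>x y z. br x (br y z) + br y (br z x) + br z (br x y) = 0)"

definition lorentzian :: "('a::euclidean_space \<Rightarrow> 'a \<Rightarrow> real) \<Rightarrow> bool" where
  "lorentzian b \<longleftrightarrow> bilinear b \<and> (\<forall>x y. b x y = b y x) \<and>
     (\<exists>B e0. independent B \<and> span B = UNIV \<and> e0 \<in> B \<and> b e0 e0 = -1 \<and>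
        (\<forall>e\<in>B - {e0}. b e e = 1) \<and> (\<forall>e\<in>B. \<forall>e'\<in>B. e \<noteq> e' \<longrightarrow> b e e' = 0))"

text \<open>Levi-Civita product, defined by the Koszul formula
  2<uv,w> = <[u,v],w> - <[v,w],u> + <[w,u],v>.\<close>

definition lc_prod :: "('a::euclidean_space \<Rightarrow> 'a \<Rightarrow> 'a) \<Rightarrow> ('a \<Rightarrow> 'a \<Rightarrow> real) \<Rightarrow> 'a \<Rightarrow> 'a \<Rightarrow> 'a" where
  "lc_prod br b u v = (THE z. \<forall>w. 2 * b z w = b (br u v) w - b (br v w) u + b (br w u) v)"

text \<open>Flatness: the curvature K(u,v) = L_[u,v] - [L_u, L_v] vanishes identically.\<close>

definition flat :: "('a::euclidean_space \<Rightarrow> 'a \<Rightarrow> 'a) \<Rightarrow> ('a \<Rightarrow> 'a \<Rightarrow> real) \<Rightarrow> bool" where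
  "flat br b \<longleftrightarrow> (\<forall>u v w. lc_prod br b (br u v) w
       - (lc_prod br b u (lc_prod br b v w) - lc_prod br b v (lc_prod br b u w)) = 0)"

definition skew_set :: "('a::euclidean_space \<Rightarrow> 'a \<Rightarrow> 'a) \<Rightarrow> ('a \<Rightarrow> 'a \<Rightarrow> real) \<Rightarrow> 'a set" where
  "skew_set br b = {u. \<forall>v w. b (br u v) w + b v (br u w) = 0}"

definition derived :: "('a::euclidean_space \<Rightarrow> 'a \<Rightarrow> 'a) \<Rightarrow> 'a set" where
  "derived br = span {br x y | x y. True}"

definition abelian_set :: "('a::euclidean_space \<Rightarrow> 'a \<Rightarrow> 'a) \<Rightarrow> 'a set \<Rightarrow> bool" where
  "abelian_set br A \<longleftrightarrow> (\<forall>x\<in>A. \<forall>y\<in>A. br x y = 0)"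

end

theory Submission
  imports Defs
begin

text \<open>
  Flatness says that \<open>v \<mapsto> L\<^sub>v\<close> is a representation of \<open>\<gg>\<close> by \<open>\<langle>\<cdot>,\<cdot>\<rangle>\<close>-skew maps. For a Killing
  vector \<open>s\<close> it forces \<open>L\<^sub>v s\<close> to be a null vector; as it is also orthogonal to the timelike
  Killing vector \<open>u\<^sub>0\<close>, it vanishes. Hence \<open>L\<^sub>s = ad\<^sub>s\<close>, \<open>[\<gg>,\<gg>] \<perp> S(\<gg>)\<close>, \<open>[\<gg>,\<gg>]\<close> is spacelike,
  and a trace argument shows that every vector orthogonal to \<open>[\<gg>,\<gg>]\<close> is Killing, which gives
  the splitting. The hard step is \<open>L\<^sub>d = 0\<close> for \<open>d \<in> [\<gg>,\<gg>]\<close>: on the orthogonal complement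
  \<open>D1\<close> of \<open>{d. L\<^sub>d = 0}\<close> in \<open>[\<gg>,\<gg>]\<close> the form \<open>-tr(L\<^sub>x L\<^sub>y)\<close> is positive definite and
  invariant, and the trace of \<open>y \<mapsto> L\<^sub>y c\<close> for the Casimir element \<open>c = \<Sum> L\<^sub>g g\<close> is zero (as
  \<open>[\<gg>,\<gg>]\<close> is unimodular) but also equals \<open>-\<Sum> \<langle>L\<^sub>g f, L\<^sub>g f\<rangle>\<close>. Conversely, the splitting
  determines \<open>L\<close> (\<open>L\<^sub>s = ad\<^sub>s\<close>, \<open>L\<^sub>d = 0\<close>), and flatness reduces to the Jacobi identity.
  The dimension of \<open>[\<gg>,\<gg>]\<close> is even because \<open>S(\<gg>)\<close> acts on it by commuting skew maps
  without common kernel, and the image of a skew map carries a symplectic form.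
\<close>

section \<open>Bilinear and symmetric forms\<close>

locale bilinear_form =
  fixes \<beta> :: "'a::euclidean_space \<Rightarrow> 'a \<Rightarrow> 'b::real_vector"
  assumes bilinear: "bilinear \<beta>"
begin

lemma add_left [simp]: "\<beta> (x + y) z = \<beta> x z + \<beta> y z"
  using bilinear_ladd[OF bilinear] .
lemma add_right [simp]: "\<beta> z (x + y) = \<beta> z x + \<beta> z y"
  using bilinear_radd[OF bilinear] .
lemma diff_left [simp]: "\<beta> (x - y) z = \<beta> x z - \<beta> y z"
  using bilinear_lsub[OF bilinear] .
lemma diff_right [simp]: "\<beta> z (x - y) = \<beta> z x - \<beta> z y"
  using bilinear_rsub[OF bilinear] .
lemma scale_left [simp]: "\<beta> (c *\<^sub>R x) z = c *\<^sub>R \<beta> x z"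
  using bilinear_lmul[OF bilinear] .
lemma scale_right [simp]: "\<beta> z (c *\<^sub>R x) = c *\<^sub>R \<beta> z x"
  using bilinear_rmul[OF bilinear] .
lemma zero_left [simp]: "\<beta> 0 z = 0"
  using bilinear_lzero[OF bilinear] .
lemma zero_right [simp]: "\<beta> z 0 = 0"
  using bilinear_rzero[OF bilinear] .
lemma minus_left [simp]: "\<beta> (- x) z = - \<beta> x z"
  using bilinear_lneg[OF bilinear] .
lemma minus_right [simp]: "\<beta> z (- x) = - \<beta> z x"
  using bilinear_rneg[OF bilinear] .
lemma linear_left: "linear (\<lambda>x. \<beta> x z)"
  using bilinear by (simp add: bilinear_def)
lemma linear_right: "linear (\<beta> z)"
  using bilinear by (simp add: bilinear_def)
lemma sum_left [simp]: "\<beta> (\<Sum>i\<in>I. f i) z = (\<Sum>i\<in>I. \<beta> (f i) z)"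
  using linear_sum[OF linear_left] .
lemma sum_right [simp]: "\<beta> z (\<Sum>i\<in>I. f i) = (\<Sum>i\<in>I. \<beta> z (f i))"
  using linear_sum[OF linear_right] .

end

lemma linear_sum_scale: "linear A \<Longrightarrow> A (\<Sum>g\<in>F. c g *\<^sub>R g) = (\<Sum>g\<in>F. c g *\<^sub>R A g)"
  by (simp add: linear_sum linear_scale)

lemma sum_sum_antisymmetric_eq_0:
  fixes F :: "'b \<Rightarrow> 'b \<Rightarrow> 'c::real_vector"
  assumes "\<And>g h. F g h = - F h g"
  shows "(\<Sum>g\<in>G. \<Sum>h\<in>G. F g h) = 0"
proof -
  let ?S = "\<Sum>g\<in>G. \<Sum>h\<in>G. F g h"
  have "?S = (\<Sum>h\<in>G. \<Sum>g\<in>G. - F h g)"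
    by (subst sum.swap) (intro sum.cong refl assms)
  also have "\<dots> = - ?S"
    by (simp add: sum_negf)
  finally have "(2::real) *\<^sub>R ?S = 0"
    by (metis add.right_inverse scaleR_2)
  then show ?thesis
    by simp
qed

locale real_bilinear_form = bilinear_form \<beta> for \<beta> :: "'a::euclidean_space \<Rightarrow> 'a \<Rightarrow> real"
begin

lemma alternating_on_imp_skew:
  assumes "subspace W" "\<And>x. x \<in> W \<Longrightarrow> \<beta> x x = 0" "u \<in> W" "v \<in> W"
  shows "\<beta> u v = - \<beta> v u"
proof -
  have "\<beta> (u + v) (u + v) = 0"
    using assms by (metis subspace_add)
  then have "\<beta> u v + \<beta> v u = 0"
    using assms(2)[OF assms(3)] assms(2)[OF assms(4)] by (simp add: algebra_simps)
  then show ?thesis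
    by linarith
qed

context
  fixes W x y
  assumes W: "subspace W" and alt: "\<And>x. x \<in> W \<Longrightarrow> \<beta> x x = 0"
    and x: "x \<in> W" and y: "y \<in> W" and xy: "\<beta> x y = 1"
begin

lemma symplectic_pair: "\<beta> y x = -1" "\<beta> x x = 0" "\<beta> y y = 0"
  using alternating_on_imp_skew[OF W alt y x] xy alt x y by auto

lemma symplectic_projection:
  assumes w: "w \<in> W"
  shows "w - \<beta> w y *\<^sub>R x + \<beta> w x *\<^sub>R y \<in> {w\<in>W. \<beta> x w = 0 \<and> \<beta> y w = 0}"
  using alternating_on_imp_skew[OF W alt w x] alternating_on_imp_skew[OF W alt w y] w x y W
  by (simp add: xy symplectic_pair subspace_add subspace_diff subspace_scale)

lemma dim_symplectic_complement: "dim W = 2 + dim {w\<in>W. \<beta> x w = 0 \<and> \<beta> y w = 0}"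
proof -
  define W' where "W' = {w\<in>W. \<beta> x w = 0 \<and> \<beta> y w = 0}"
  have sW': "subspace W'"
    using W unfolding W'_def subspace_def by auto
  have "x \<noteq> 0" "x \<noteq> y" "y \<notin> span {x}"
    using xy symplectic_pair by (auto simp: span_singleton)
  then have plane: "dim (span {y, x}) = 2"
    by (simp add: dim_span dim_eq_card_independent independent_insert)
  have "{a + c |a c. a \<in> span {y, x} \<and> c \<in> W'} = W"
  proof (intro set_eqI iffI)
    fix w assume "w \<in> {a + c |a c. a \<in> span {y, x} \<and> c \<in> W'}"
    moreover have "span {y, x} \<subseteq> W"
      using x y W by (simp add: span_minimal)
    ultimately show "w \<in> W"
      using W by (auto simp: W'_def intro: subspace_add)
  next
    fix w assume w: "w \<in> W"
    have "w = (\<beta> w y *\<^sub>R x - \<beta> w x *\<^sub>R y) + (w - \<beta> w y *\<^sub>R x + \<beta> w x *\<^sub>R y)"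
      by simp
    moreover have "\<beta> w y *\<^sub>R x - \<beta> w x *\<^sub>R y \<in> span {y, x}"
      by (intro span_diff span_scale span_base) auto
    ultimately show "w \<in> {a + c |a c. a \<in> span {y, x} \<and> c \<in> W'}"
      using symplectic_projection[OF w] unfolding W'_def by blast
  qed
  moreover have "span {y, x} \<inter> W' = {0}"
  proof (intro subset_antisym subsetI)
    fix v assume v: "v \<in> span {y, x} \<inter> W'"
    then obtain k j where "v = k *\<^sub>R y + j *\<^sub>R x"
      by (auto simp: span_insert span_singleton algebra_simps)
    moreover have "\<beta> x v = 0" "\<beta> y v = 0"
      using v by (auto simp: W'_def)
    ultimately show "v \<in> {0}"
      by (simp add: xy symplectic_pair)
  qed (use sW' span_zero subspace_0 in auto)
  ultimately show ?thesis
    using dim_sums_Int[OF subspace_span sW', of "{y, x}"] plane by (simp add: W'_def)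
qed

lemma symplectic_complement_nondegenerate:
  assumes v: "v \<in> W" "\<beta> x v = 0" "\<beta> y v = 0" and z: "z \<in> W" "\<beta> v z \<noteq> 0"
  shows "\<exists>z\<in>{w\<in>W. \<beta> x w = 0 \<and> \<beta> y w = 0}. \<beta> v z \<noteq> 0"
proof -
  have "\<beta> v x = 0" "\<beta> v y = 0"
    using v alternating_on_imp_skew[OF W alt v(1) x] alternating_on_imp_skew[OF W alt v(1) y]
    by simp_all
  then have "\<beta> v (z - \<beta> z y *\<^sub>R x + \<beta> z x *\<^sub>R y) \<noteq> 0"
    using z(2) by simp
  then show ?thesis
    using symplectic_projection[OF z(1)] by blast
qed

end

lemma even_dim_if_symplectic:
  assumes "subspace W" and "\<And>x. x \<in> W \<Longrightarrow> \<beta> x x = 0"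
    and "\<And>x. x \<in> W \<Longrightarrow> x \<noteq> 0 \<Longrightarrow> \<exists>y\<in>W. \<beta> x y \<noteq> 0"
  shows "even (dim W)"
  using assms
proof (induction "dim W" arbitrary: W rule: less_induct)
  case less
  show ?case
  proof (cases "W \<subseteq> {0}")
    case True
    then show ?thesis
      by (metis dim_eq_0 even_zero)
  next
    case False
    then obtain x y0 where x: "x \<in> W" "x \<noteq> 0" and y0: "y0 \<in> W" "\<beta> x y0 \<noteq> 0"
      using less.prems(3) by blast
    define y where "y = (1 / \<beta> x y0) *\<^sub>R y0"
    have y: "y \<in> W" "\<beta> x y = 1"
      using y0 less.prems(1) by (simp_all add: y_def subspace_scale)
    define W' where "W' = {w\<in>W. \<beta> x w = 0 \<and> \<beta> y w = 0}"
    have dim: "dim W = 2 + dim W'"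
      unfolding W'_def by (rule dim_symplectic_complement[OF less.prems(1,2) x(1) y])
    have "even (dim W')"
    proof (rule less.hyps)
      show "subspace W'"
        using less.prems(1) unfolding W'_def subspace_def by auto
      show "\<exists>z\<in>W'. \<beta> v z \<noteq> 0" if "v \<in> W'" "v \<noteq> 0" for v
        using that less.prems(3)[of v] symplectic_complement_nondegenerate[OF less.prems(1,2) x(1) y]
        unfolding W'_def by blast
    qed (use dim less.prems(2) in \<open>auto simp: W'_def\<close>)
    then show ?thesis
      using dim by simp
  qed
qed

end

locale symmetric_form = real_bilinear_form \<beta> for \<beta> :: "'a::euclidean_space \<Rightarrow> 'a \<Rightarrow> real" +
  assumes symmetric: "\<beta> x y = \<beta> y x"
begin

definition posdef_on :: "'a set \<Rightarrow> bool" where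
  "posdef_on W \<longleftrightarrow> (\<forall>x\<in>W. x \<noteq> 0 \<longrightarrow> \<beta> x x > 0)"

lemma posdef_on_square_pos: "posdef_on W \<Longrightarrow> x \<in> W \<Longrightarrow> x \<noteq> 0 \<Longrightarrow> \<beta> x x > 0"
  by (simp add: posdef_on_def)

lemma posdef_on_square_nonneg: "posdef_on W \<Longrightarrow> x \<in> W \<Longrightarrow> \<beta> x x \<ge> 0"
  by (cases "x = 0") (auto simp: posdef_on_def less_imp_le)

lemma posdef_on_square_eq_0_iff: "posdef_on W \<Longrightarrow> x \<in> W \<Longrightarrow> \<beta> x x = 0 \<longleftrightarrow> x = 0"
  by (auto simp: posdef_on_def)

lemma posdef_on_subset: "posdef_on W \<Longrightarrow> V \<subseteq> W \<Longrightarrow> posdef_on V"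
  by (auto simp: posdef_on_def)

definition onb :: "'a set \<Rightarrow> 'a set \<Rightarrow> bool" where
  "onb W F \<longleftrightarrow> finite F \<and> F \<subseteq> W \<and> W \<subseteq> span F \<and> (\<forall>f\<in>F. \<beta> f f = 1) \<and>
     (\<forall>f\<in>F. \<forall>g\<in>F. f \<noteq> g \<longrightarrow> \<beta> f g = 0)"

lemma onb_coeff:
  assumes "onb W F" "g \<in> F"
  shows "\<beta> (\<Sum>f\<in>F. u f *\<^sub>R f) g = u g"
proof -
  have "\<beta> (\<Sum>f\<in>F. u f *\<^sub>R f) g = (\<Sum>f\<in>F. u f * \<beta> f g)"
    by simp
  also have "\<dots> = (\<Sum>f\<in>{g}. u f * \<beta> f g)"
    using assms by (intro sum.mono_neutral_right) (auto simp: onb_def)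
  also have "\<dots> = u g"
    using assms by (simp add: onb_def)
  finally show ?thesis .
qed

lemma onb_expansion:
  assumes "onb W F" "x \<in> W"
  shows "x = (\<Sum>f\<in>F. \<beta> x f *\<^sub>R f)"
proof -
  obtain u where u: "x = (\<Sum>f\<in>F. u f *\<^sub>R f)"
    using assms span_finite[of F] by (auto simp: onb_def)
  then have "\<beta> x g = u g" if "g \<in> F" for g
    using onb_coeff[OF assms(1) that] by simp
  then have "(\<Sum>f\<in>F. \<beta> x f *\<^sub>R f) = (\<Sum>f\<in>F. u f *\<^sub>R f)"
    by (intro sum.cong) auto
  then show ?thesis
    using u by simp
qed

lemma onb_orthogonal:
  assumes "onb W F" "\<And>f. f \<in> F \<Longrightarrow> \<beta> x f = 0" "w \<in> W"
  shows "\<beta> x w = 0"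
proof -
  have "\<beta> x w = (\<Sum>f\<in>F. \<beta> w f * \<beta> x f)"
    by (subst onb_expansion[OF assms(1,3)]) simp
  then show ?thesis
    using assms(2) by simp
qed

lemma onb_insert:
  assumes W: "subspace W" and f: "f \<in> W" "\<beta> f f = 1" and F: "onb {x\<in>W. \<beta> x f = 0} F"
  shows "onb W (insert f F)"
  unfolding onb_def
proof (intro conjI ballI impI)
  have FW: "F \<subseteq> W" and orth: "\<forall>g\<in>F. \<beta> g f = 0"
    using F by (auto simp: onb_def)
  show "finite (insert f F)" "insert f F \<subseteq> W"
    using F f FW by (auto simp: onb_def)
  show "W \<subseteq> span (insert f F)"
  proof
    fix x assume x: "x \<in> W"
    have "x - \<beta> x f *\<^sub>R f \<in> span F"
      using x f W F by (auto simp: onb_def subspace_diff subspace_scale)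
    then show "x \<in> span (insert f F)"
      by (metis diff_add_cancel insertI1 span_add span_base span_mono span_scale subsetD
          subset_insertI)
  qed
  show "\<beta> g g = 1" if "g \<in> insert f F" for g
    using that f F by (auto simp: onb_def)
  show "\<beta> g h = 0" if "g \<in> insert f F" "h \<in> insert f F" "g \<noteq> h" for g h
    using that F orth symmetric[of f] by (auto simp: onb_def)
qed

lemma onb_exists:
  assumes "subspace W" "posdef_on W"
  obtains F where "onb W F"
  using assms
proof (induction "dim W" arbitrary: W thesis rule: less_induct)
  case less
  show ?case
  proof (cases "W \<subseteq> {0}")
    case True
    then show ?thesis
      by (intro less.prems(1)[of "{}"]) (auto simp: onb_def)
  next
    case False
    then obtain w where w: "w \<in> W" "w \<noteq> 0"
      by blast
    define f where "f = (1 / sqrt (\<beta> w w)) *\<^sub>R w"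
    have f: "f \<in> W" "\<beta> f f = 1"
      using w less.prems(2,3) posdef_on_square_pos[of W w]
      by (auto simp: f_def subspace_scale real_sqrt_mult[symmetric])
    define W' where "W' = {x\<in>W. \<beta> x f = 0}"
    have W': "subspace W'" "posdef_on W'"
      using less.prems(2,3) posdef_on_subset[of W W']
      by (auto simp: W'_def subspace_def)
    have "span W' \<subset> span W"
      using f less.prems(2) W' by (metis (mono_tags) W'_def mem_Collect_eq psubsetI span_eq_iff
          subsetI zero_neq_one)
    then have "dim W' < dim W"
      by (rule dim_psubset)
    then obtain F where "onb W' F"
      using less.hyps W' by blast
    then show ?thesis
      using less.prems(1) onb_insert[OF less.prems(2) f] by (auto simp: W'_def)
  qed
qed

lemma onb_projection_in: "onb W F \<Longrightarrow> subspace W \<Longrightarrow> (\<Sum>f\<in>F. \<beta> x f *\<^sub>R f) \<in> W"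
  by (intro subspace_sum subspace_scale) (auto simp: onb_def)

lemma onb_residual_orthogonal:
  assumes "onb W F" "w \<in> W"
  shows "\<beta> (x - (\<Sum>f\<in>F. \<beta> x f *\<^sub>R f)) w = 0"
proof (rule onb_orthogonal[OF assms(1) _ assms(2)])
  fix g assume "g \<in> F"
  then show "\<beta> (x - (\<Sum>f\<in>F. \<beta> x f *\<^sub>R f)) g = 0"
    using onb_coeff[OF assms(1), of g "\<lambda>f. \<beta> x f"] by (simp only: diff_left diff_self)
qed

lemma orthogonal_decomposition:
  assumes "subspace W" "posdef_on W"
  obtains w where "w \<in> W" "\<And>v. v \<in> W \<Longrightarrow> \<beta> (x - w) v = 0"
proof -
  obtain F where "onb W F"
    using onb_exists[OF assms] .
  then show ?thesis
    using that onb_projection_in[OF _ assms(1)] onb_residual_orthogonal by blast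
qed

lemma onb_Un:
  assumes F: "onb V F" and G: "onb W G" and VW: "\<And>v w. v \<in> V \<Longrightarrow> w \<in> W \<Longrightarrow> \<beta> v w = 0"
    and U: "V \<union> W \<subseteq> U" "\<And>u. u \<in> U \<Longrightarrow> \<exists>v\<in>V. \<exists>w\<in>W. u = v + w"
  shows "onb U (F \<union> G)" and "F \<inter> G = {}"
proof -
  have FV: "F \<subseteq> V" and GW: "G \<subseteq> W"
    using F G by (auto simp: onb_def)
  have FG: "\<beta> f g = 0" "\<beta> g f = 0" if "f \<in> F" "g \<in> G" for f g
    using VW[of f g] that FV GW symmetric[of g f] by auto
  show "F \<inter> G = {}"
    using FG F by (fastforce simp: onb_def)
  have "U \<subseteq> span (F \<union> G)"
  proof
    fix u assume "u \<in> U"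
    then obtain v w where "v \<in> V" "w \<in> W" "u = v + w"
      using U(2) by blast
    moreover have "v \<in> span (F \<union> G)" "w \<in> span (F \<union> G)"
      using \<open>v \<in> V\<close> \<open>w \<in> W\<close> F G span_mono[of F "F \<union> G"] span_mono[of G "F \<union> G"]
      by (auto simp: onb_def)
    ultimately show "u \<in> span (F \<union> G)"
      by (simp add: span_add)
  qed
  then show "onb U (F \<union> G)"
    using F G FG U(1) FV GW by (auto simp: onb_def)
qed

definition onb_trace :: "'a set \<Rightarrow> ('a \<Rightarrow> 'a) \<Rightarrow> real" where
  "onb_trace F A = (\<Sum>f\<in>F. \<beta> (A f) f)"

lemma onb_trace_diff: "onb_trace F (\<lambda>x. A x - B x) = onb_trace F A - onb_trace F B"
  by (simp add: onb_trace_def sum_subtractf)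

lemma onb_trace_comm:
  assumes F: "onb W F" and A: "linear A" "\<And>x. x \<in> W \<Longrightarrow> A x \<in> W"
    and B: "linear B" "\<And>x. x \<in> W \<Longrightarrow> B x \<in> W"
  shows "onb_trace F (\<lambda>x. A (B x)) = onb_trace F (\<lambda>x. B (A x))"
proof -
  have FW: "F \<subseteq> W"
    using F by (simp add: onb_def)
  have expand: "\<beta> (C (D f)) f = (\<Sum>g\<in>F. \<beta> (D f) g * \<beta> (C g) f)"
    if "linear C" "\<And>x. x \<in> W \<Longrightarrow> D x \<in> W" "f \<in> F" for C D f
  proof -
    have "D f \<in> W"
      using that FW by blast
    then have "C (D f) = (\<Sum>g\<in>F. \<beta> (D f) g *\<^sub>R C g)"
      using arg_cong[where f = C, OF onb_expansion[OF F \<open>D f \<in> W\<close>]] linear_sum_scale[OF that(1)]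
      by simp
    then show ?thesis
      by simp
  qed
  have "onb_trace F (\<lambda>x. A (B x)) = (\<Sum>f\<in>F. \<Sum>g\<in>F. \<beta> (B f) g * \<beta> (A g) f)"
    unfolding onb_trace_def using expand[where C = A and D = B, OF A(1) B(2)] by simp
  also have "\<dots> = (\<Sum>g\<in>F. \<Sum>f\<in>F. \<beta> (A g) f * \<beta> (B f) g)"
    by (subst sum.swap) (simp add: mult.commute)
  also have "\<dots> = onb_trace F (\<lambda>x. B (A x))"
    unfolding onb_trace_def using expand[where C = B and D = A, OF B(1) A(2)] by simp
  finally show ?thesis .
qed

lemma onb_trace_skew:
  assumes "onb W F" "\<And>x y. x \<in> W \<Longrightarrow> y \<in> W \<Longrightarrow> \<beta> (A x) y = - \<beta> x (A y)"
  shows "onb_trace F A = 0"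
proof -
  have "\<beta> (A f) f = 0" if "f \<in> F" for f
    using assms(2)[of f f] that assms(1) symmetric[of f "A f"] by (auto simp: onb_def)
  then show ?thesis
    by (simp add: onb_trace_def)
qed

lemma onb_trace_square_skew:
  assumes "onb W F" "\<And>x y. x \<in> W \<Longrightarrow> y \<in> W \<Longrightarrow> \<beta> (A x) y = - \<beta> x (A y)"
    and "\<And>x. x \<in> W \<Longrightarrow> A x \<in> W"
  shows "onb_trace F (\<lambda>x. A (A x)) = - (\<Sum>f\<in>F. \<beta> (A f) (A f))"
proof -
  have "\<beta> (A (A f)) f = - \<beta> (A f) (A f)" if "f \<in> F" for f
    using assms that by (auto simp: onb_def)
  then show ?thesis
    by (simp add: onb_trace_def sum_negf)
qed

lemma onb_sum_squares_eq_0: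
  assumes F: "onb W F" and P: "posdef_on W" and A: "linear A" "\<And>x. x \<in> W \<Longrightarrow> A x \<in> W"
    and sum: "(\<Sum>f\<in>F. \<beta> (A f) (A f)) = 0" and x: "x \<in> W"
  shows "A x = 0"
proof -
  have FW: "F \<subseteq> W" and "finite F"
    using F by (auto simp: onb_def)
  then have "\<beta> (A f) (A f) = 0" if "f \<in> F" for f
    using sum_nonneg_eq_0_iff[of F "\<lambda>f. \<beta> (A f) (A f)"] sum that
      posdef_on_square_nonneg[OF P] A(2) by blast
  then have "A f = 0" if "f \<in> F" for f
    using that FW A(2) posdef_on_square_eq_0_iff[OF P] by blast
  moreover have "A x = (\<Sum>f\<in>F. \<beta> x f *\<^sub>R A f)"
    using arg_cong[where f = A, OF onb_expansion[OF F x]] linear_sum_scale[OF A(1)] by simp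
  ultimately show ?thesis
    by simp
qed

lemma symmetric_eq_0_if_square_eq_commutator:
  assumes W: "subspace W" "posdef_on W"
    and R: "linear R" "\<And>x. x \<in> W \<Longrightarrow> R x \<in> W"
      "\<And>x y. x \<in> W \<Longrightarrow> y \<in> W \<Longrightarrow> \<beta> (R x) y = \<beta> x (R y)"
    and A: "linear A" "\<And>x. x \<in> W \<Longrightarrow> A x \<in> W"
    and RA: "\<And>x. x \<in> W \<Longrightarrow> R (R x) = R (A x) - A (R x)"
    and x: "x \<in> W"
  shows "R x = 0"
proof -
  obtain F where F: "onb W F"
    using onb_exists[OF W] .
  then have FW: "F \<subseteq> W"
    by (simp add: onb_def)
  have "(\<Sum>f\<in>F. \<beta> (R f) (R f)) = onb_trace F (\<lambda>x. R (R x))"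
    using FW R(2,3) by (auto simp: onb_trace_def intro!: sum.cong)
  also have "\<dots> = onb_trace F (\<lambda>x. R (A x) - A (R x))"
    using FW RA by (auto simp: onb_trace_def intro!: sum.cong)
  also have "\<dots> = onb_trace F (\<lambda>x. R (A x)) - onb_trace F (\<lambda>x. A (R x))"
    by (rule onb_trace_diff)
  also have "\<dots> = 0"
    using onb_trace_comm[OF F R(1,2) A] by simp
  finally show ?thesis
    using onb_sum_squares_eq_0[OF F W(2) R(1,2) _ x] by blast
qed

lemma skew_commutator_eq_0:
  assumes W: "subspace W" "posdef_on W"
    and A: "linear A" "\<And>x. x \<in> W \<Longrightarrow> A x \<in> W"
    and B: "linear B" "\<And>x. x \<in> W \<Longrightarrow> B x \<in> W"
    and X: "linear X" "\<And>x. x \<in> W \<Longrightarrow> X x = A (B x) - B (A x)"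
      "\<And>x y. x \<in> W \<Longrightarrow> y \<in> W \<Longrightarrow> \<beta> (X x) y = - \<beta> x (X y)"
    and XB: "\<And>x. x \<in> W \<Longrightarrow> B (X x) = X (B x)"
    and x: "x \<in> W"
  shows "X x = 0"
proof -
  obtain F where F: "onb W F"
    using onb_exists[OF W] .
  then have FW: "F \<subseteq> W"
    by (simp add: onb_def)
  have XW: "X x \<in> W" if "x \<in> W" for x
    using that A B X(2) W(1) by (simp add: subspace_diff)
  have XA: "linear (\<lambda>x. X (A x))"
    using linear_compose[OF A(1) X(1)] by (simp add: o_def)
  have "- (\<Sum>f\<in>F. \<beta> (X f) (X f)) = onb_trace F (\<lambda>x. X (X x))"
    using onb_trace_square_skew[OF F X(3) XW] by simp
  also have "\<dots> = onb_trace F (\<lambda>x. X (A (B x)) - X (B (A x)))"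
  proof -
    have "X (X x) = X (A (B x)) - X (B (A x))" if "x \<in> W" for x
      using X(2)[OF that] linear_diff[OF X(1)] by simp
    then show ?thesis
      unfolding onb_trace_def using FW by (intro sum.cong) auto
  qed
  also have "\<dots> = onb_trace F (\<lambda>x. B (X (A x))) - onb_trace F (\<lambda>x. X (B (A x)))"
    using onb_trace_comm[OF F XA _ B] A(2) XW by (simp add: onb_trace_diff)
  also have "\<dots> = 0"
  proof -
    have "onb_trace F (\<lambda>x. B (X (A x))) = onb_trace F (\<lambda>x. X (B (A x)))"
      unfolding onb_trace_def using FW XB A(2) by (intro sum.cong) auto
    then show ?thesis
      by simp
  qed
  finally show ?thesis
    using onb_sum_squares_eq_0[OF F W(2) X(1) XW _ x] by simp
qed

context
  fixes W A
  assumes W: "subspace W" "posdef_on W" and A: "linear A" "\<And>x. x \<in> W \<Longrightarrow> A x \<in> W"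
    and skew: "\<And>x y. x \<in> W \<Longrightarrow> y \<in> W \<Longrightarrow> \<beta> (A x) y = - \<beta> x (A y)"
begin

lemma skew_image: "subspace (A ` W)" "A ` W \<subseteq> W" "posdef_on (A ` W)"
proof -
  show "A ` W \<subseteq> W"
    using A(2) by blast
  then show "posdef_on (A ` W)"
    by (rule posdef_on_subset[OF W(2)])
qed (rule linear_subspace_image[OF A(1) W(1)])

lemma skew_kernel: "subspace {x\<in>W. A x = 0}"
  using W(1) A(1) by (auto simp: subspace_def linear_add linear_scale linear_0)

lemma skew_image_inter_kernel:
  assumes "x \<in> A ` W" "A x = 0"
  shows "x = 0"
proof -
  obtain y where "y \<in> W" "x = A y"
    using assms(1) by blast
  then have "\<beta> x x = 0" "x \<in> W"
    using skew[of y x] assms(2) A(2) by simp_all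
  then show ?thesis
    using posdef_on_square_eq_0_iff[OF W(2)] by blast
qed

lemma dim_skew_image_kernel: "dim W = dim (A ` W) + dim {x\<in>W. A x = 0}"
proof -
  have "{a + c |a c. a \<in> A ` W \<and> c \<in> {x\<in>W. A x = 0}} = W"
  proof (intro set_eqI iffI)
    fix x assume "x \<in> {a + c |a c. a \<in> A ` W \<and> c \<in> {x\<in>W. A x = 0}}"
    then show "x \<in> W"
      using skew_image(2) W(1) by (auto intro: subspace_add)
  next
    fix x assume x: "x \<in> W"
    obtain w where w: "w \<in> A ` W" "\<And>v. v \<in> A ` W \<Longrightarrow> \<beta> (x - w) v = 0"
      using orthogonal_decomposition[OF skew_image(1,3)] by blast
    have r: "x - w \<in> W"
      using x w(1) skew_image(2) W(1) by (auto intro: subspace_diff)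
    \<comment> \<open>\<open>\<langle>A r, A r\<rangle> = - \<langle>r, A (A r)\<rangle> = 0\<close> for \<open>r = x - w\<close>, as \<open>r\<close> is orthogonal to the image\<close>
    then have "\<beta> (A (x - w)) (A (x - w)) = 0"
      using skew[OF r] w(2) A(2) by auto
    then have "A (x - w) = 0"
      using r A(2) posdef_on_square_eq_0_iff[OF W(2)] by blast
    then show "x \<in> {a + c |a c. a \<in> A ` W \<and> c \<in> {x\<in>W. A x = 0}}"
      using w(1) r by (intro CollectI exI[of _ w] exI[of _ "x - w"]) simp
  qed
  moreover have "A ` W \<inter> {x\<in>W. A x = 0} = {0}"
    using skew_image_inter_kernel subspace_0[OF skew_image(1)] subspace_0[OF skew_kernel] by blast
  ultimately show ?thesis
    using dim_sums_Int[OF skew_image(1) skew_kernel] by simp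
qed

lemma even_dim_skew_image: "even (dim (A ` W))"
proof -
  interpret \<omega>: real_bilinear_form "\<lambda>x y. \<beta> (A x) y"
    by unfold_locales
      (auto simp: bilinear_def linear_right linear_add[OF A(1)] linear_scale[OF A(1)]
        intro!: linearI)
  show ?thesis
  proof (rule \<omega>.even_dim_if_symplectic[OF skew_image(1)])
    show "\<beta> (A x) x = 0" if "x \<in> A ` W" for x
      using skew[of x x] symmetric[of x "A x"] that skew_image(2) by auto
    show "\<exists>y\<in>A ` W. \<beta> (A x) y \<noteq> 0" if x: "x \<in> A ` W" "x \<noteq> 0" for x
    proof -
      have "A x \<noteq> 0" "A x \<in> A ` W"
        using x skew_image_inter_kernel skew_image(2) by auto
      then show ?thesis
        using posdef_on_square_pos[OF skew_image(3), of "A x"] by (intro bexI[of _ "A x"]) auto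
    qed
  qed
qed

end

lemma even_dim_if_commuting_skew_family:
  assumes "subspace W" "posdef_on W"
    and lin: "\<And>s. s \<in> I \<Longrightarrow> linear (A s)"
    and "\<And>s x. s \<in> I \<Longrightarrow> x \<in> W \<Longrightarrow> A s x \<in> W"
    and "\<And>s x y. s \<in> I \<Longrightarrow> x \<in> W \<Longrightarrow> y \<in> W \<Longrightarrow> \<beta> (A s x) y = - \<beta> x (A s y)"
    and "\<And>s t x. s \<in> I \<Longrightarrow> t \<in> I \<Longrightarrow> x \<in> W \<Longrightarrow> A s (A t x) = A t (A s x)"
    and "\<And>x. x \<in> W \<Longrightarrow> \<forall>s\<in>I. A s x = 0 \<Longrightarrow> x = 0"
  shows "even (dim W)"
  using assms(1,2,4-)
proof (induction "dim W" arbitrary: W rule: less_induct)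
  case less
  show ?case
  proof (cases "\<exists>s\<in>I. \<exists>x\<in>W. A s x \<noteq> 0")
    case False
    then have "W \<subseteq> {0}"
      using less.prems(6) by blast
    then show ?thesis
      by (metis dim_eq_0 even_zero)
  next
    case True
    then obtain s x0 where s: "s \<in> I" and x0: "x0 \<in> W" "A s x0 \<noteq> 0"
      by blast
    define W2 where "W2 = {x\<in>W. A s x = 0}"
    note skew_s = less.prems(1,2) lin[OF s] less.prems(3)[OF s] less.prems(4)[OF s]
    note split = dim_skew_image_kernel[OF skew_s, folded W2_def] even_dim_skew_image[OF skew_s]
    have "even (dim W2)"
    proof (rule less.hyps)
      have "\<not> A s ` W \<subseteq> {0}"
        using x0 by blast
      then have "dim (A s ` W) \<noteq> 0"
        by (simp add: dim_eq_0)
      then show "dim W2 < dim W"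
        using split(1) by linarith
      show "subspace W2"
        unfolding W2_def by (rule skew_kernel[OF skew_s])
      show "posdef_on W2"
        using posdef_on_subset[OF less.prems(2)] by (auto simp: W2_def)
      show "A t x \<in> W2" if "t \<in> I" "x \<in> W2" for t x
        using that s less.prems(3)[of t x] less.prems(5)[of s t x] lin[OF that(1)]
        by (auto simp: W2_def linear_0)
    qed (use less.prems(4-6) in \<open>auto simp: W2_def\<close>)
    then show ?thesis
      using split by simp
  qed
qed

end

section \<open>Lorentzian forms\<close>

locale lorentzian_form =
  fixes b :: "'a::euclidean_space \<Rightarrow> 'a \<Rightarrow> real"
  assumes lorentzian: "lorentzian b"
begin

sublocale symmetric_form b
  using lorentzian by unfold_locales (auto simp: lorentzian_def)

lemma lorentzian_onb:
  obtains B e0 where "finite B" "e0 \<in> B" "b e0 e0 = -1" "\<forall>e\<in>B - {e0}. b e e = 1"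
    and "\<forall>e\<in>B. \<forall>e'\<in>B. e \<noteq> e' \<longrightarrow> b e e' = 0" and "\<And>x. x = (\<Sum>e\<in>B. (b x e * b e e) *\<^sub>R e)"
proof -
  obtain B e0 where B: "independent B" "span B = UNIV" "e0 \<in> B" "b e0 e0 = -1"
    "\<forall>e\<in>B - {e0}. b e e = 1" and orth: "\<forall>e\<in>B. \<forall>e'\<in>B. e \<noteq> e' \<longrightarrow> b e e' = 0"
    using lorentzian unfolding lorentzian_def by blast
  have fin: "finite B"
    using independent_bound[OF B(1)] by simp
  have square: "b e e * b e e = 1" if "e \<in> B" for e
    using B that by (cases "e = e0") auto
  have "x = (\<Sum>e\<in>B. (b x e * b e e) *\<^sub>R e)" for x
  proof -
    obtain u where u: "x = (\<Sum>e\<in>B. u e *\<^sub>R e)"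
      using span_finite[OF fin] B(2) by blast
    have "b x e' = (\<Sum>e\<in>{e'}. u e * b e e')" if "e' \<in> B" for e'
    proof -
      have "b x e' = (\<Sum>e\<in>B. u e * b e e')"
        using u by simp
      also have "\<dots> = (\<Sum>e\<in>{e'}. u e * b e e')"
        using fin that orth by (intro sum.mono_neutral_right) auto
      finally show ?thesis .
    qed
    then have "u e = b x e * b e e" if "e \<in> B" for e
      using square[OF that] that by (simp add: mult.assoc)
    then have "(\<Sum>e\<in>B. (b x e * b e e) *\<^sub>R e) = (\<Sum>e\<in>B. u e *\<^sub>R e)"
      by (intro sum.cong) auto
    then show ?thesis
      using u by simp
  qed
  then show ?thesis
    using that fin B(3-5) orth by blast
qed

lemma nondegenerate:
  assumes "\<And>w. b x w = 0"
  shows "x = 0"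
proof -
  obtain B e0 where "x = (\<Sum>e\<in>B. (b x e * b e e) *\<^sub>R e)"
    by (rule lorentzian_onb) blast
  with assms show ?thesis
    by simp
qed

lemma eq_by_form: "(\<And>w. b x w = b y w) \<Longrightarrow> x = y"
  using nondegenerate[of "x - y"] by simp

lemma riesz_representation:
  assumes "linear \<phi>"
  obtains z where "\<And>w. b z w = \<phi> w"
proof -
  obtain B e0 where expansion: "\<And>x. x = (\<Sum>e\<in>B. (b x e * b e e) *\<^sub>R e)"
    by (rule lorentzian_onb) blast
  define z where "z = (\<Sum>e\<in>B. (b e e * \<phi> e) *\<^sub>R e)"
  have "b z w = \<phi> w" for w
  proof -
    have "\<phi> w = (\<Sum>e\<in>B. (b w e * b e e) * \<phi> e)"
      using arg_cong[where f = \<phi>, OF expansion[of w]] linear_sum_scale[OF assms] by simp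
    also have "\<dots> = b z w"
      by (simp add: z_def symmetric[of _ w] mult_ac)
    finally show ?thesis
      by simp
  qed
  then show ?thesis
    using that by blast
qed

lemma exists_timelike_posdef_complement:
  obtains e0 where "posdef_on {w. b e0 w = 0}"
proof -
  obtain B e0 where B: "finite B" "e0 \<in> B" "b e0 e0 = -1" "\<forall>e\<in>B - {e0}. b e e = 1"
    and expansion: "\<And>x. x = (\<Sum>e\<in>B. (b x e * b e e) *\<^sub>R e)"
    by (rule lorentzian_onb) blast
  have "b w w > 0" if w: "b e0 w = 0" "w \<noteq> 0" for w
  proof -
    have "b w w = (\<Sum>e\<in>B. (b w e)\<^sup>2 * b e e)"
      by (subst (1) expansion[of w]) (simp add: symmetric[of _ w] power2_eq_square mult_ac)
    also have "\<dots> = (\<Sum>e\<in>B - {e0}. (b w e)\<^sup>2)"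
      using B w(1) symmetric[of e0 w] by (simp add: sum.remove)
    finally have ww: "b w w = (\<Sum>e\<in>B - {e0}. (b w e)\<^sup>2)" .
    have "\<exists>e\<in>B. b w e \<noteq> 0"
    proof (rule ccontr)
      assume "\<not> (\<exists>e\<in>B. b w e \<noteq> 0)"
      with expansion[of w] have "w = 0"
        by simp
      with w(2) show False ..
    qed
    then obtain e where "e \<in> B" "b w e \<noteq> 0"
      by blast
    moreover have "b w e0 = 0"
      using w(1) symmetric[of e0 w] by simp
    ultimately have "e \<in> B - {e0}" "(b w e)\<^sup>2 > 0"
      by auto
    then show ?thesis
      unfolding ww using B(1) by (intro sum_pos2[of _ e]) auto
  qed
  then show ?thesis
    by (intro that) (auto simp: posdef_on_def)
qed

lemma posdef_on_orthogonal_timelike: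
  assumes u: "b u u < 0"
  shows "posdef_on {v. b u v = 0}"
  unfolding posdef_on_def
proof (intro ballI impI, rule ccontr)
  fix v assume v: "v \<in> {v. b u v = 0}" "v \<noteq> 0" and "\<not> b v v > 0"
  then have uv: "b u v = 0" and vv: "b v v \<le> 0"
    by auto
  obtain e0 where e0: "posdef_on {w. b e0 w = 0}"
    by (rule exists_timelike_posdef_complement)
  define w where "w = b v e0 *\<^sub>R u - b u e0 *\<^sub>R v"
  have "b e0 w = 0"
    by (simp add: w_def symmetric[of e0])
  moreover have "b w w = (b v e0)\<^sup>2 * b u u + (b u e0)\<^sup>2 * b v v"
    using uv by (simp add: w_def symmetric[of v u] power2_eq_square algebra_simps)
  then have "b w w \<le> 0"
    using u vv by (simp add: add_nonpos_nonpos mult_nonneg_nonpos)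
  ultimately have "w = 0"
    using e0 by (force simp: posdef_on_def)
  moreover have "b u w = b v e0 * b u u"
    using uv by (simp add: w_def)
  ultimately have "b v e0 = 0"
    using u by simp
  then have "b u e0 *\<^sub>R v = 0"
    using \<open>w = 0\<close> by (simp add: w_def)
  then have "b e0 u = 0"
    using v(2) symmetric[of e0 u] by simp
  then have "b u u > 0"
    using e0 u by (force simp: posdef_on_def)
  then show False
    using u by simp
qed

end

section \<open>The Levi-Civita product of a Lorentzian Lie algebra\<close>

locale lorentzian_lie_algebra = lorentzian_form b for b :: "'a::euclidean_space \<Rightarrow> 'a \<Rightarrow> real" +
  fixes br :: "'a \<Rightarrow> 'a \<Rightarrow> 'a"
  assumes lie: "lie_algebra br"
begin

sublocale bracket: bilinear_form br
  using lie by unfold_locales (simp add: lie_algebra_def)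

lemma bracket_self [simp]: "br x x = 0"
  using lie by (simp add: lie_algebra_def)

lemma bracket_antisym: "br x y = - br y x"
proof -
  have "br (x + y) (x + y) = br x x + br y x + (br x y + br y y)"
    by (simp only: bracket.add_left bracket.add_right)
  then have "br x y + br y x = 0"
    by (simp add: add.commute)
  then show ?thesis
    by (simp add: eq_neg_iff_add_eq_0)
qed

lemma jacobi_derivation: "br x (br y z) = br (br x y) z + br y (br x z)"
proof -
  have "br x (br y z) + br y (br z x) + br z (br x y) = 0"
    using lie unfolding lie_algebra_def by blast
  then show ?thesis
    using bracket_antisym[of z "br x y"] bracket_antisym[of z x] by (simp add: algebra_simps)
qed

definition koszul :: "'a \<Rightarrow> 'a \<Rightarrow> 'a \<Rightarrow> real" where
  "koszul u v w = b (br u v) w - b (br v w) u + b (br w u) v"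

abbreviation L :: "'a \<Rightarrow> 'a \<Rightarrow> 'a" where
  "L \<equiv> lc_prod br b"

lemma lc_prod_form: "b (L u v) w = koszul u v w / 2"
proof -
  have lin: "linear (\<lambda>w. koszul u v w / 2)"
    by (rule linearI)
      (simp_all add: koszul_def symmetric[of _ u] symmetric[of _ v] algebra_simps
        add_divide_distrib diff_divide_distrib)
  obtain z where z: "\<And>w. b z w = koszul u v w / 2"
    using riesz_representation[OF lin] by blast
  have "\<exists>!z. \<forall>w. 2 * b z w = b (br u v) w - b (br v w) u + b (br w u) v"
  proof (rule ex1I[of _ z])
    show "\<forall>w. 2 * b z w = b (br u v) w - b (br v w) u + b (br w u) v"
      using z by (simp add: koszul_def field_simps)
    show "y = z" if y: "\<forall>w. 2 * b y w = b (br u v) w - b (br v w) u + b (br w u) v" for y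
    proof (rule eq_by_form)
      fix w
      show "b y w = b z w"
        using y[rule_format, of w] z[of w] unfolding koszul_def by (simp add: field_simps)
    qed
  qed
  then have "\<forall>w. 2 * b (L u v) w = koszul u v w"
    unfolding lc_prod_def koszul_def by (rule theI')
  then show ?thesis
    by (simp add: field_simps)
qed

lemma lc_prod_eqI: "(\<And>w. b z w = koszul u v w / 2) \<Longrightarrow> L u v = z"
  by (rule eq_by_form) (simp add: lc_prod_form)

sublocale lc: bilinear_form L
proof
  show "bilinear L"
    unfolding bilinear_def
    by (intro allI conjI linearI lc_prod_eqI)
      (simp_all add: lc_prod_form koszul_def field_simps)
qed

lemma lc_prod_skew: "b (L u v) w = - b v (L u w)"
  by (simp add: lc_prod_form koszul_def bracket_antisym[of w u] bracket_antisym[of v u]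
      bracket_antisym[of w v] symmetric[of v] field_simps)

lemma lc_prod_torsion_free: "L u v - L v u = br u v"
proof (rule eq_by_form)
  fix w
  show "b (L u v - L v u) w = b (br u v) w"
    by (simp only: diff_left lc_prod_form)
      (simp add: koszul_def bracket_antisym[of v u] bracket_antisym[of w v]
        bracket_antisym[of w u] field_simps)
qed

abbreviation S :: "'a set" where
  "S \<equiv> skew_set br b"

abbreviation D :: "'a set" where
  "D \<equiv> derived br"

lemma skew_setD: "s \<in> S \<Longrightarrow> b (br s v) w = - b v (br s w)"
  by (simp add: skew_set_def eq_neg_iff_add_eq_0)

lemma subspace_skew_set: "subspace S"
  unfolding subspace_def skew_set_def
proof (intro conjI ballI allI CollectI)
  fix c x v w assume "x \<in> {u. \<forall>v w. b (br u v) w + b v (br u w) = 0}"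
  then have "c * (b (br x v) w + b v (br x w)) = 0"
    by simp
  then show "b (br (c *\<^sub>R x) v) w + b v (br (c *\<^sub>R x) w) = 0"
    by (simp add: algebra_simps)
qed (auto simp: algebra_simps)

lemma subspace_derived: "subspace D"
  unfolding derived_def by (rule subspace_span)

lemma bracket_in_derived: "br x y \<in> D"
  unfolding derived_def by (rule span_base) blast

lemma derived_induct [consumes 1, case_names subspace bracket]:
  assumes "d \<in> D" and "subspace {d. P d}" and "\<And>x y. P (br x y)"
  shows "P d"
  using assms(1) unfolding derived_def by (rule span_induct[OF _ assms(2)]) (use assms(3) in auto)

lemma lc_prod_skew_set_right: "s \<in> S \<Longrightarrow> 2 * b (L v s) w = - b (br v w) s"
  using skew_setD[of s v w] bracket_antisym[of v s] symmetric[of v "br s w"]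
  by (simp add: lc_prod_form koszul_def bracket_antisym[of w v])

lemma lc_prod_skew_set_self: "s \<in> S \<Longrightarrow> L s s = 0"
  using lc_prod_skew_set_right[of s s] skew_setD[of s _ s] by (intro nondegenerate) simp

lemma lc_prod_skew_set_right_antisym: "s \<in> S \<Longrightarrow> b (L u s) w = - b (L w s) u"
  using lc_prod_skew_set_right[of s u w] lc_prod_skew_set_right[of s w u] bracket_antisym[of u w]
  by simp

lemma lc_prod_skew_set_if_orthogonal:
  assumes orth: "\<forall>s\<in>S. \<forall>d\<in>D. b s d = 0" and s: "s \<in> S"
  shows "L s v = br s v"
proof (rule lc_prod_eqI)
  fix w
  have "b (br w s) v = b (br s v) w"
    using skew_setD[OF s, of w v] bracket_antisym[of w s] symmetric[of w] by simp
  moreover have "b (br v w) s = 0"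
    using orth s bracket_in_derived symmetric by metis
  ultimately show "b (br s v) w = koszul s v w / 2"
    by (simp add: koszul_def)
qed

lemma lc_prod_derived_if_splitting:
  assumes orth: "\<forall>s\<in>S. \<forall>d\<in>D. b s d = 0" and "S + D = UNIV"
    and abelian: "abelian_set br D" "abelian_set br S" and d: "d \<in> D"
  shows "L d v = 0"
proof (rule lc_prod_eqI)
  fix w
  obtain s1 d1 s2 d2 where 1: "s1 \<in> S" "d1 \<in> D" "v = s1 + d1"
    and 2: "s2 \<in> S" "d2 \<in> D" "w = s2 + d2"
    using \<open>S + D = UNIV\<close> by (metis UNIV_I set_plus_elim)
  have orth': "b (br x y) s = 0" if "s \<in> S" for x y s
    using orth that bracket_in_derived symmetric by metis
  have zero: "br d d1 = 0" "br d2 d = 0" "br d1 d2 = 0" "br s1 s2 = 0"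
    using abelian d 1 2 unfolding abelian_set_def by blast+
  have "b (br d v) w = b (br s1 d2) d"
    using 1 2 zero bracket_antisym[of d s1] orth'[OF 2(1), of s1 d] skew_setD[OF 1(1), of d d2]
      symmetric[of d] by simp
  moreover have "b (br v w) d = b (br s1 d2) d - b (br s2 d1) d"
    using 1 2 zero bracket_antisym[of d1 s2] by simp
  moreover have "b (br w d) v = - b (br s2 d1) d"
    using 1 2 zero orth'[OF 1(1), of s2 d] skew_setD[OF 2(1), of d1 d] symmetric[of d1] by simp
  ultimately show "b 0 w = koszul d v w / 2"
    by (simp add: koszul_def)
qed

lemma flat_if_splitting:
  assumes orth: "\<forall>s\<in>S. \<forall>d\<in>D. b s d = 0" and "S + D = UNIV"
    and abelian: "abelian_set br D" "abelian_set br S"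
  shows "flat br b"
  unfolding flat_def
proof (intro allI)
  fix u v w
  obtain s1 d1 s2 d2 where 1: "s1 \<in> S" "d1 \<in> D" "u = s1 + d1"
    and 2: "s2 \<in> S" "d2 \<in> D" "v = s2 + d2"
    using \<open>S + D = UNIV\<close> by (metis UNIV_I set_plus_elim)
  note L_S = lc_prod_skew_set_if_orthogonal[OF orth]
  note L_D = lc_prod_derived_if_splitting[OF assms]
  have "br s1 s2 = 0"
    using abelian 1 2 unfolding abelian_set_def by blast
  then have "br s1 (br s2 w) - br s2 (br s1 w) = 0"
    using jacobi_derivation[of s1 s2 w] by simp
  moreover have "L (br u v) w = 0"
    using L_D bracket_in_derived by blast
  ultimately show "L (br u v) w - (L u (L v w) - L v (L u w)) = 0"
    using 1 2 L_S L_D by simp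
qed

end

section \<open>Flat metrics with a timelike Killing vector\<close>

locale flat_timelike_killing = lorentzian_lie_algebra +
  fixes u0 :: 'a
  assumes flat: "flat br b" and u0_skew: "u0 \<in> S" and u0_timelike: "b u0 u0 < 0"
begin

lemma lc_prod_bracket: "L (br u v) w = L u (L v w) - L v (L u w)"
  using flat unfolding flat_def by (simp add: algebra_simps)

lemma lc_prod_assoc_skew_set:
  assumes s: "s \<in> S"
  shows "L v (L w s) = L (L v w) s"
proof -
  define T where "T v w = L v (L w s) - L (L v w) s" for v w
  have sym: "T v w = T w v" for v w
  proof -
    have "T v w - T w v = L v (L w s) - L w (L v s) - L (L v w - L w v) s"
      by (simp add: T_def algebra_simps)
    then show ?thesis
      using lc_prod_bracket[of v w s] lc_prod_torsion_free[of v w] by simp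
  qed
  have skew: "b (T v w) z = - b (T v z) w" for v w z
    using lc_prod_skew[of v "L w s" z] lc_prod_skew_set_right_antisym[OF s, of "L v w" z]
      lc_prod_skew[of v "L z s" w] lc_prod_skew_set_right_antisym[OF s, of "L v z" w]
    by (simp add: T_def)
  \<comment> \<open>\<open>b (T v w) z\<close> is symmetric in \<open>v, w\<close> and skew in \<open>w, z\<close>, hence zero\<close>
  have "b (T v w) z = 0" for z
  proof -
    have "b (T v w) z = - b (T w z) v"
      by (simp only: sym[of v w] skew[of w v z])
    also have "\<dots> = b (T z v) w"
      by (simp only: sym[of w z] skew[of z w v] minus_minus)
    also have "\<dots> = - b (T v w) z"
      by (simp only: sym[of z v] skew[of v z w])
    finally show ?thesis
      by simp
  qed
  then show ?thesis
    using nondegenerate[of "T v w"] by (simp add: T_def)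
qed

lemma lc_prod_skew_set_right_eq_0:
  assumes s: "s \<in> S"
  shows "L v s = 0"
proof -
  have null: "b (L v s) (L v s) = 0" if "s \<in> S" for v s
    using lc_prod_skew_set_right_antisym[OF that, of "L v s" v] lc_prod_assoc_skew_set[OF that, of v s]
      lc_prod_skew_set_self[OF that] by simp
  have orth: "b u0 x = 0 \<Longrightarrow> b x x = 0 \<Longrightarrow> x = 0" for x
    using posdef_on_orthogonal_timelike[OF u0_timelike] by (auto simp: posdef_on_def)
  have "L v u0 = 0" for v
    using lc_prod_skew_set_right_antisym[OF u0_skew, of v u0] lc_prod_skew_set_self[OF u0_skew]
      symmetric[of u0] null[OF u0_skew] by (intro orth) simp_all
  then have "b u0 (L v s) = 0"
    using lc_prod_skew[of v s u0] symmetric[of u0] by simp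
  then show ?thesis
    using orth null[OF s] by blast
qed

lemma lc_prod_skew_set: "s \<in> S \<Longrightarrow> L s v = br s v"
  using lc_prod_torsion_free[of s v] lc_prod_skew_set_right_eq_0[of s v] by simp

lemma derived_orthogonal_skew_set:
  assumes "s \<in> S" "d \<in> D"
  shows "b d s = 0"
  using assms(2)
proof (induction rule: derived_induct)
  case subspace
  show ?case
    unfolding subspace_def by simp
next
  case (bracket x y)
  show ?case
    using lc_prod_skew_set_right[OF assms(1), of x y] lc_prod_skew_set_right_eq_0[OF assms(1)] by simp
qed

lemma posdef_on_derived: "posdef_on D"
  using posdef_on_orthogonal_timelike[OF u0_timelike] derived_orthogonal_skew_set[OF u0_skew]
    symmetric[of u0] by (auto simp: posdef_on_def)

lemma lc_prod_right_eq_0_if_orthogonal_derived: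
  assumes x: "\<And>d. d \<in> D \<Longrightarrow> b x d = 0"
  shows "L y x = 0"
proof -
  have x_bracket: "b (br v w) x = 0" for v w
    using x[OF bracket_in_derived] symmetric by metis
  define R A where "R v = L v x" and "A v = L x v" for v
  have R_sym: "b (R v) w = b v (R w)" for v w
    using x_bracket[of v w] x_bracket[of w v] symmetric[of v]
    by (simp add: R_def lc_prod_form koszul_def bracket_antisym[of x v] bracket_antisym[of x w])
  have "L x x = 0"
    by (rule nondegenerate) (simp add: lc_prod_form koszul_def x_bracket)
  then have RA: "R (R v) = R (A v) - A (R v)" for v
    using lc_prod_bracket[of v x x] lc_prod_torsion_free[of v x, symmetric]
    by (simp add: R_def A_def algebra_simps)
  have "b (br u0 x) w = 0" for w
    using lc_prod_form[of u0 x w] lc_prod_skew_set[OF u0_skew, of x]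
      derived_orthogonal_skew_set[OF u0_skew bracket_in_derived] x_bracket
    by (simp add: koszul_def)
  then have "R u0 = 0"
    using nondegenerate lc_prod_skew_set[OF u0_skew] by (simp add: R_def)
  define V where "V = {v. b u0 v = 0}"
  have V: "subspace V" "posdef_on V"
    using posdef_on_orthogonal_timelike[OF u0_timelike] by (auto simp: V_def subspace_def)
  have "R v \<in> V" "A v \<in> V" if "v \<in> V" for v
    using that \<open>R u0 = 0\<close> R_sym[of u0 v] lc_prod_skew[of x v u0]
      lc_prod_skew_set_right_eq_0[OF u0_skew, of x] symmetric[of u0]
    by (auto simp: V_def A_def)
  moreover have "linear R" "linear A"
    by (intro linearI; simp add: R_def A_def)+
  ultimately have "R v = 0" if "v \<in> V" for v
    using symmetric_eq_0_if_square_eq_commutator[OF V, of R A] that RA R_sym by blast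
  moreover have "y - (b u0 y / b u0 u0) *\<^sub>R u0 \<in> V"
    using u0_timelike by (simp add: V_def)
  ultimately show ?thesis
    using \<open>R u0 = 0\<close> by (force simp: R_def)
qed

lemma skew_set_if_orthogonal_derived:
  assumes "\<And>d. d \<in> D \<Longrightarrow> b x d = 0"
  shows "x \<in> S"
proof -
  have "br x v = L x v" for v
    using lc_prod_torsion_free[of x v] lc_prod_right_eq_0_if_orthogonal_derived[OF assms] by simp
  then show ?thesis
    unfolding skew_set_def using lc_prod_skew[of x] by simp
qed

lemma skew_set_inter_derived: "x \<in> S \<Longrightarrow> x \<in> D \<Longrightarrow> x = 0"
  using derived_orthogonal_skew_set[of x x] posdef_on_square_eq_0_iff[OF posdef_on_derived] by simp

lemma skew_set_plus_derived:
  obtains s d where "s \<in> S" "d \<in> D" "x = s + d"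
proof -
  obtain d where d: "d \<in> D" "\<And>e. e \<in> D \<Longrightarrow> b (x - d) e = 0"
    using orthogonal_decomposition[OF subspace_derived posdef_on_derived] by blast
  have "x - d \<in> S"
    using d(2) by (rule skew_set_if_orthogonal_derived)
  with d(1) show ?thesis
    by (intro that[of "x - d" d]) simp_all
qed

lemma skew_set_abelian:
  assumes s: "s \<in> S" and t: "t \<in> S"
  shows "br s t = 0"
proof -
  have "b (br s t) d = 0" if "d \<in> D" for d
    using skew_setD[OF s, of t d] derived_orthogonal_skew_set[OF t bracket_in_derived, of s d]
      symmetric[of t] by simp
  then have "br s t \<in> S"
    by (rule skew_set_if_orthogonal_derived)
  then show ?thesis
    using skew_set_inter_derived bracket_in_derived by blast
qed

lemma derived_if_orthogonal_skew_set:
  assumes y: "\<And>s. s \<in> S \<Longrightarrow> b y s = 0"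
  shows "y \<in> D"
proof -
  obtain s d where sd: "s \<in> S" "d \<in> D" "y = s + d"
    by (rule skew_set_plus_derived)
  have "b s z = 0" for z
  proof -
    obtain s' d' where sd': "s' \<in> S" "d' \<in> D" "z = s' + d'"
      by (rule skew_set_plus_derived)
    have "b s s' = b y s' - b d s'"
      using sd by simp
    then show ?thesis
      using y sd sd' derived_orthogonal_skew_set symmetric[of s d'] by simp
  qed
  then have "s = 0"
    by (rule nondegenerate)
  then show ?thesis
    using sd by simp
qed

lemma lc_prod_derived_closed: "d \<in> D \<Longrightarrow> L x d \<in> D"
  using lc_prod_skew[of x d] lc_prod_skew_set_right_eq_0
  by (intro derived_if_orthogonal_skew_set) simp

definition D0 :: "'a set" where
  "D0 = {d\<in>D. \<forall>v. L d v = 0}"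

definition D1 :: "'a set" where
  "D1 = {d\<in>D. \<forall>z\<in>D0. b d z = 0}"

lemma subspace_D0: "subspace D0"
  using subspace_derived by (auto simp: D0_def subspace_def)

lemma subspace_D1: "subspace D1"
  using subspace_derived by (auto simp: D1_def subspace_def)

lemma posdef_on_D0: "posdef_on D0"
  using posdef_on_subset[OF posdef_on_derived] by (auto simp: D0_def)

lemma posdef_on_D1: "posdef_on D1"
  using posdef_on_subset[OF posdef_on_derived] by (auto simp: D1_def)

lemma D0_inter_D1: "x \<in> D0 \<Longrightarrow> x \<in> D1 \<Longrightarrow> x = 0"
  using posdef_on_square_eq_0_iff[OF posdef_on_D1] by (auto simp: D1_def)

lemma derived_eq_D0_plus_D1:
  assumes "d \<in> D"
  obtains z p where "z \<in> D0" "p \<in> D1" "d = z + p"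
proof -
  obtain z where z: "z \<in> D0" "\<And>w. w \<in> D0 \<Longrightarrow> b (d - z) w = 0"
    using orthogonal_decomposition[OF subspace_D0 posdef_on_D0] by blast
  moreover have "d - z \<in> D"
    using assms z(1) subspace_derived by (auto simp: D0_def intro: subspace_diff)
  ultimately have "d - z \<in> D1"
    by (simp add: D1_def)
  with z(1) show ?thesis
    by (intro that[of z "d - z"]) simp_all
qed

lemma lc_prod_D0_closed:
  assumes z: "z \<in> D0"
  shows "L x z \<in> D0"
proof -
  have "L z v = 0" for v
    using z by (simp add: D0_def)
  then have "L x z = br x z" "L (br x z) v = 0" for v
    using lc_prod_torsion_free[of x z] lc_prod_bracket[of x z v] by simp_all
  then show ?thesis
    using lc_prod_derived_closed[of z x] z by (simp add: D0_def)
qed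

lemma lc_prod_D1_closed: "p \<in> D1 \<Longrightarrow> L x p \<in> D1"
  using lc_prod_skew[of x p] lc_prod_D0_closed lc_prod_derived_closed
  by (auto simp: D1_def)

lemma bracket_D1_closed: "p \<in> D1 \<Longrightarrow> q \<in> D1 \<Longrightarrow> br p q \<in> D1"
  using lc_prod_torsion_free[of p q] lc_prod_D1_closed subspace_D1 by (metis subspace_diff)

lemma onb_trace_lc_prod:
  assumes "onb D F"
  shows "onb_trace F (L x) = 0"
  by (rule onb_trace_skew[OF assms]) (rule lc_prod_skew)

lemma onb_trace_bracket_derived:
  assumes F: "onb D F" and d: "d \<in> D"
  shows "onb_trace F (br d) = 0"
  using d
proof (induction rule: derived_induct)
  case subspace
  show ?case
    unfolding subspace_def onb_trace_def by (simp add: sum.distrib flip: sum_distrib_left)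
next
  case (bracket x z)
  have "onb_trace F (br (br x z)) = onb_trace F (\<lambda>y. br x (br z y)) - onb_trace F (\<lambda>y. br z (br x y))"
    using jacobi_derivation[of x z] by (simp add: onb_trace_def sum_subtractf sum.distrib algebra_simps)
  moreover have "onb_trace F (\<lambda>y. br x (br z y)) = onb_trace F (\<lambda>y. br z (br x y))"
    by (rule onb_trace_comm[OF F]) (simp_all add: bracket.linear_right bracket_in_derived)
  ultimately show ?case
    by simp
qed

lemma onb_trace_lc_prod_right:
  assumes F: "onb D F" and d: "d \<in> D"
  shows "onb_trace F (\<lambda>y. L y d) = 0"
proof -
  have "L y d = L d y - br d y" for y
    using lc_prod_torsion_free[of d y] by (simp add: algebra_simps)
  then have "onb_trace F (\<lambda>y. L y d) = onb_trace F (\<lambda>y. L d y - br d y)"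
    by simp
  also have "\<dots> = 0"
    using onb_trace_lc_prod[OF F] onb_trace_bracket_derived[OF F d] by (simp add: onb_trace_diff)
  finally show ?thesis .
qed

definition trace_form :: "'a set \<Rightarrow> 'a \<Rightarrow> 'a \<Rightarrow> real" where
  "trace_form F x y = - onb_trace F (\<lambda>v. L x (L y v))"

lemma trace_form_symmetric_form:
  assumes F: "onb D F"
  shows "symmetric_form (trace_form F)"
proof
  show "bilinear (trace_form F)"
    unfolding bilinear_def
    by (intro allI conjI linearI)
      (simp_all add: trace_form_def onb_trace_def sum.distrib sum_distrib_left algebra_simps)
  show "trace_form F x y = trace_form F y x" for x y
    unfolding trace_form_def
    by (subst onb_trace_comm[OF F]) (simp_all add: lc.linear_right lc_prod_derived_closed)
qed

lemma trace_form_invariant: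
  assumes F: "onb D F"
  shows "trace_form F (br x y) w = - trace_form F y (br x w)"
proof -
  have "linear (\<lambda>v. L y (L w v))"
    using linear_compose[OF lc.linear_right lc.linear_right] by (simp add: o_def)
  then have "onb_trace F (\<lambda>v. L x (L y (L w v))) = onb_trace F (\<lambda>v. L y (L w (L x v)))"
    by (intro onb_trace_comm[OF F, where A = "L x"]) (simp_all add: lc.linear_right lc_prod_derived_closed)
  then show ?thesis
    by (simp add: trace_form_def lc_prod_bracket onb_trace_diff)
qed

lemma trace_form_pos:
  assumes F: "onb D F" and p: "p \<in> D1" "p \<noteq> 0"
  shows "trace_form F p p > 0"
proof -
  have FD: "F \<subseteq> D"
    using F by (simp add: onb_def)
  have tf: "trace_form F p p = (\<Sum>f\<in>F. b (L p f) (L p f))"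
    using onb_trace_square_skew[OF F lc_prod_skew lc_prod_derived_closed] by (simp add: trace_form_def)
  have vanish: "L p v = 0" if "trace_form F p p = 0" for v
  proof -
    obtain s d where sd: "s \<in> S" "d \<in> D" "v = s + d"
      by (rule skew_set_plus_derived)
    have "(\<Sum>f\<in>F. b (L p f) (L p f)) = 0"
      using that tf by simp
    then have "L p d = 0"
      using onb_sum_squares_eq_0[OF F posdef_on_derived lc.linear_right lc_prod_derived_closed _ sd(2)]
      by blast
    then show ?thesis
      using sd lc_prod_skew_set_right_eq_0 by simp
  qed
  have "trace_form F p p \<noteq> 0"
  proof
    assume "trace_form F p p = 0"
    then have "p \<in> D0"
      using vanish p(1) by (simp add: D0_def D1_def)
    then show False
      using D0_inter_D1 p by blast
  qed
  moreover have "trace_form F p p \<ge> 0"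
    unfolding tf using FD lc_prod_derived_closed posdef_on_square_nonneg[OF posdef_on_derived]
    by (intro sum_nonneg) blast
  ultimately show ?thesis
    by simp
qed

lemma lc_prod_casimir:
  assumes F: "onb D F" and G: "symmetric_form.onb (trace_form F) D1 G" and p: "p \<in> D1"
  shows "L p (\<Sum>g\<in>G. L g g) = (\<Sum>g\<in>G. L g (L g p))"
proof -
  interpret tf: symmetric_form "trace_form F"
    by (rule trace_form_symmetric_form[OF F])
  have GD1: "G \<subseteq> D1"
    using G by (simp add: tf.onb_def)
  have step: "L p (L g g) = L g (L g p) + (L g (br p g) + L (br p g) g)" for g
    using lc_prod_bracket[of p g g] lc_prod_torsion_free[of p g] by (simp add: algebra_simps)
  define m where "m g h = trace_form F (br p g) h" for g h
  \<comment> \<open>\<open>ad\<^sub>p\<close> is skew for the invariant form, so its matrix in the basis \<open>G\<close> is antisymmetric\<close>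
  have antisym: "m g h = - m h g" for g h
    using trace_form_invariant[OF F, of p g h] tf.symmetric[of g "br p h"] by (simp add: m_def)
  have "L g (br p g) + L (br p g) g = (\<Sum>h\<in>G. m g h *\<^sub>R (L g h + L h g))" if "g \<in> G" for g
  proof -
    have "br p g = (\<Sum>h\<in>G. m g h *\<^sub>R h)"
      unfolding m_def using tf.onb_expansion[OF G bracket_D1_closed[OF p]] GD1 that by blast
    then show ?thesis
      by (simp add: scaleR_add_right sum.distrib)
  qed
  then have "(\<Sum>g\<in>G. L g (br p g) + L (br p g) g) = (\<Sum>g\<in>G. \<Sum>h\<in>G. m g h *\<^sub>R (L g h + L h g))"
    by (rule sum.cong[OF refl])
  also have "\<dots> = 0"
    by (intro sum_sum_antisymmetric_eq_0, subst antisym) (simp add: add.commute)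
  finally show ?thesis
    using step by (simp add: sum.distrib)
qed

lemma lc_prod_D1_basis_eq_0:
  assumes FZ: "onb D0 FZ" and FP: "onb D1 FP" and FD: "onb D (FZ \<union> FP)" "FZ \<inter> FP = {}"
    and G: "symmetric_form.onb (trace_form (FZ \<union> FP)) D1 G" and f: "f \<in> FP" and g: "g \<in> G"
  shows "L g f = 0"
proof -
  interpret tf: symmetric_form "trace_form (FZ \<union> FP)"
    by (rule trace_form_symmetric_form[OF FD(1)])
  have GD1: "G \<subseteq> D1" and "finite G"
    using G by (auto simp: tf.onb_def)
  have FZD0: "FZ \<subseteq> D0" and FPD1: "FP \<subseteq> D1" and "finite FZ" "finite FP"
    using FZ FP by (auto simp: onb_def)
  have square: "b (L g f) (L g f) \<ge> 0" if "f \<in> FP" for f g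
    using that FPD1 lc_prod_derived_closed posdef_on_square_nonneg[OF posdef_on_derived]
    by (auto simp: D1_def)
  define v0 where "v0 = (\<Sum>g\<in>G. L g g)"
  have "v0 \<in> D"
    unfolding v0_def using GD1 subspace_derived lc_prod_derived_closed
    by (intro subspace_sum) (auto simp: D1_def)
  then have "0 = onb_trace (FZ \<union> FP) (\<lambda>y. L y v0)"
    using onb_trace_lc_prod_right[OF FD(1)] by simp
  also have "\<dots> = (\<Sum>f\<in>FP. b (L f v0) f)"
    using FZD0 \<open>finite FZ\<close> \<open>finite FP\<close> FD(2)
    by (simp add: onb_trace_def sum.union_disjoint sum.neutral D0_def subset_iff)
  also have "\<dots> = - (\<Sum>f\<in>FP. \<Sum>g\<in>G. b (L g f) (L g f))"
    using lc_prod_casimir[OF FD(1) G] FPD1 lc_prod_skew by (simp add: v0_def sum_negf subset_iff)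
  finally have "(\<Sum>f\<in>FP. \<Sum>g\<in>G. b (L g f) (L g f)) = 0"
    by simp
  then have "b (L g f) (L g f) = 0"
    using f g square \<open>finite FP\<close> \<open>finite G\<close>
    by (simp add: sum_nonneg_eq_0_iff sum_nonneg)
  then show ?thesis
    using f FPD1 lc_prod_derived_closed posdef_on_square_eq_0_iff[OF posdef_on_derived]
    by (auto simp: D1_def)
qed

lemma lc_prod_D1_D1:
  assumes q: "q \<in> D1" and p: "p \<in> D1"
  shows "L q p = 0"
proof -
  obtain FZ where FZ: "onb D0 FZ"
    using onb_exists[OF subspace_D0 posdef_on_D0] .
  obtain FP where FP: "onb D1 FP"
    using onb_exists[OF subspace_D1 posdef_on_D1] .
  have "b v w = 0" if "v \<in> D0" "w \<in> D1" for v w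
    using that symmetric[of v w] by (simp add: D1_def)
  moreover have "D0 \<union> D1 \<subseteq> D"
    by (auto simp: D0_def D1_def)
  moreover have "\<exists>v\<in>D0. \<exists>w\<in>D1. u = v + w" if "u \<in> D" for u
    using that by (rule derived_eq_D0_plus_D1) blast
  ultimately have FD: "onb D (FZ \<union> FP)" "FZ \<inter> FP = {}"
    using onb_Un[OF FZ FP] by blast+
  interpret tf: symmetric_form "trace_form (FZ \<union> FP)"
    by (rule trace_form_symmetric_form[OF FD(1)])
  obtain G where G: "tf.onb D1 G"
    using tf.onb_exists[OF subspace_D1] trace_form_pos[OF FD(1)] by (auto simp: tf.posdef_on_def)
  have "L g p = 0" if "g \<in> G" for g
  proof -
    have "L g p = (\<Sum>f\<in>FP. b p f *\<^sub>R L g f)"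
      using arg_cong[where f = "L g", OF onb_expansion[OF FP p]] linear_sum_scale[OF lc.linear_right]
      by simp
    then show ?thesis
      using lc_prod_D1_basis_eq_0[OF FZ FP FD G _ that] by simp
  qed
  moreover have "L q p = (\<Sum>g\<in>G. trace_form (FZ \<union> FP) q g *\<^sub>R L g p)"
    using arg_cong[where f = "\<lambda>q. L q p", OF tf.onb_expansion[OF G q]] by simp
  ultimately show ?thesis
    by simp
qed

lemma lc_prod_bracket_derived_derived:
  assumes d: "d \<in> D" and e: "e \<in> D"
  shows "L (br d e) y = 0"
proof -
  obtain z p z' p' where zp: "z \<in> D0" "p \<in> D1" "d = z + p" and zp': "z' \<in> D0" "p' \<in> D1" "e = z' + p'"
    using derived_eq_D0_plus_D1[OF d] derived_eq_D0_plus_D1[OF e] by metis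
  have "L z w = 0" "L z' w = 0" for w
    using zp zp' by (auto simp: D0_def)
  then have "L (br d e) y = L (br p p') y"
    using zp zp' by (simp add: lc_prod_bracket)
  also have "br p p' = 0"
    using lc_prod_torsion_free[of p p'] lc_prod_D1_D1 zp(2) zp'(2) by simp
  finally show ?thesis
    by simp
qed

lemma lc_prod_bracket_derived:
  assumes e: "e \<in> D"
  shows "L (br x e) y = 0"
proof -
  have xe: "br x e \<in> D"
    by (rule bracket_in_derived)
  have "L (br x e) d = 0" if "d \<in> D" for d
  proof (rule skew_commutator_eq_0[OF subspace_derived posdef_on_derived,
        where A = "L x" and B = "L e" and X = "L (br x e)"])
    show "L (br x e) d = L x (L e d) - L e (L x d)" for d
      by (rule lc_prod_bracket)
    show "L e (L (br x e) d) = L (br x e) (L e d)" for d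
      using lc_prod_bracket[of e "br x e" d] lc_prod_bracket_derived_derived[OF e xe] by simp
  qed (use that lc_prod_skew lc_prod_derived_closed lc.linear_right in auto)
  moreover obtain s d where "s \<in> S" "d \<in> D" "y = s + d"
    by (rule skew_set_plus_derived)
  ultimately show ?thesis
    using lc_prod_skew_set_right_eq_0 by simp
qed

lemma lc_prod_derived_eq_0:
  assumes "d \<in> D"
  shows "L d y = 0"
proof -
  have "\<forall>y. L d y = 0"
    using assms
  proof (induction rule: derived_induct)
    case subspace
    show ?case
      unfolding subspace_def by simp
  next
    case (bracket x x')
    obtain s d where "s \<in> S" "d \<in> D" "x' = s + d"
      by (rule skew_set_plus_derived)
    moreover obtain s' d' where "s' \<in> S" "d' \<in> D" "x = s' + d'"
      by (rule skew_set_plus_derived)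
    ultimately have "br x x' = br x d - br s d' "
      using skew_set_abelian bracket_antisym[of d' s] by simp
    then show ?case
      using lc_prod_bracket_derived \<open>d \<in> D\<close> \<open>d' \<in> D\<close> by simp
  qed
  then show ?thesis
    by blast
qed

lemma derived_abelian: "d \<in> D \<Longrightarrow> e \<in> D \<Longrightarrow> br d e = 0"
  using lc_prod_torsion_free[of d e] lc_prod_derived_eq_0 by simp

lemma even_dim_derived: "even (dim D)"
proof (rule even_dim_if_commuting_skew_family[OF subspace_derived posdef_on_derived, of S br])
  show "br s (br t x) = br t (br s x)" if "s \<in> S" "t \<in> S" for s t x
    using jacobi_derivation[of s t x] skew_set_abelian[OF that] by simp
  show "d = 0" if d: "d \<in> D" and central: "\<forall>s\<in>S. br s d = 0" for d
  proof -
    have "L x d = 0" for x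
    proof -
      obtain s e where "s \<in> S" "e \<in> D" "x = s + e"
        by (rule skew_set_plus_derived)
      then show ?thesis
        using lc_prod_torsion_free[of x d] lc_prod_derived_eq_0[OF d] central derived_abelian[OF _ d]
        by simp
    qed
    then have bracket_orth: "b (br x y) d = 0" for x y
      using lc_prod_torsion_free[of x y, symmetric] lc_prod_skew[of x y d] lc_prod_skew[of y x d]
      by simp
    have "b e d = 0" if "e \<in> D" for e
      using that by (induction rule: derived_induct) (simp_all add: subspace_def bracket_orth)
    then show ?thesis
      using d posdef_on_square_eq_0_iff[OF posdef_on_derived] by blast
  qed
qed (use bracket.linear_right bracket_in_derived skew_setD in auto)

lemma orthogonal_abelian_splitting:
  "(\<forall>s\<in>S. \<forall>d\<in>D. b s d = 0) \<and> S \<inter> D = {0} \<and> S + D = UNIV \<and>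
    abelian_set br D \<and> abelian_set br S"
proof (intro conjI)
  show "\<forall>s\<in>S. \<forall>d\<in>D. b s d = 0"
    using derived_orthogonal_skew_set symmetric by metis
  show "S \<inter> D = {0}"
    using skew_set_inter_derived subspace_0[OF subspace_skew_set] subspace_0[OF subspace_derived]
    by blast
  have "\<exists>s\<in>S. \<exists>d\<in>D. x = s + d" for x
    by (rule skew_set_plus_derived) blast
  then show "S + D = UNIV"
    by (auto simp: set_plus_def)
  show "abelian_set br D" "abelian_set br S"
    using derived_abelian skew_set_abelian by (auto simp: abelian_set_def)
qed

end

theorem theorem1p1:
  fixes br :: "'a::euclidean_space \<Rightarrow> 'a \<Rightarrow> 'a" and b :: "'a \<Rightarrow> 'a \<Rightarrow> real"
  assumes "lie_algebra br" and "lorentzian b"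
  shows "((flat br b \<and> (\<exists>u\<in>skew_set br b. b u u < 0)) \<longleftrightarrow>
           ((\<forall>s\<in>skew_set br b. \<forall>d\<in>derived br. b s d = 0)
            \<and> skew_set br b \<inter> derived br = {0}
            \<and> skew_set br b + derived br = UNIV
            \<and> abelian_set br (derived br)
            \<and> abelian_set br (skew_set br b)
            \<and> (\<exists>u\<in>skew_set br b. b u u < 0)))
         \<and> (flat br b \<and> (\<exists>u\<in>skew_set br b. b u u < 0) \<longrightarrow>
           even (dim (derived br))
           \<and> (\<forall>a\<in>skew_set br b. \<forall>v. lc_prod br b a v = br a v)
           \<and> (\<forall>a\<in>derived br. \<forall>v. lc_prod br b a v = 0))"
proof -
  interpret lorentzian_lie_algebra b br
    using assms by unfold_locales
  have flat_consequences:
    "(\<forall>s\<in>S. \<forall>d\<in>D. b s d = 0) \<and> S \<inter> D = {0} \<and> S + D = UNIV \<and>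
      abelian_set br D \<and> abelian_set br S \<and>
      even (dim D) \<and> (\<forall>a\<in>S. \<forall>v. L a v = br a v) \<and> (\<forall>a\<in>D. \<forall>v. L a v = 0)"
    if "flat br b" "u0 \<in> S" "b u0 u0 < 0" for u0
  proof -
    interpret flat_timelike_killing b br u0
      using that by unfold_locales
    show ?thesis
      using orthogonal_abelian_splitting even_dim_derived lc_prod_skew_set lc_prod_derived_eq_0
      by blast
  qed
  show ?thesis
    using flat_consequences flat_if_splitting by blast
qed

end
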